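(* There exists a probability function $w$ on $SL_3$ satisfying Constant Exchangeability and Predicate Exchangeability (Px) but not Strong Predicate Exchangeability (SPx). Concretely, with the atoms of $L_3$ listed in lexicographic order $\alpha_1,\dots,\alpha_8$ and $\vec b=\langle \tfrac1{19},\tfrac2{19},\tfrac4{19},\tfrac5{19},\tfrac2{19},\tfrac3{19},\tfrac1{19},\tfrac1{19}\rangle$, the function $w=\frac16\sum_{\sigma}w_{\sigma\vec b}$ (sum over the six permutations of atoms induced by permutations of the predicates $P_1,P_2,P_3$) satisfies Px, while the state descriptions $\Theta=\alpha_2(a_1)\wedge\alpha_4(a_2)\wedge\alpha_5(a_3)\wedge\alpha_7(a_4)\wedge\alpha_7(a_5)$ and $\Phi=\alpha_3(a_1)\wedge\alpha_5(a_2)\wedge\alpha_6(a_3)\wedge\alpha_6(a_4)\wedge\alpha_7(a_5)$ have the same P-spectrum but $w(\Theta)\neq w(\Phi)$.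
   Context: $L_q$ is the first-order language with unary predicates $P_1,\dots,P_q$ and constants $a_1,a_2,\dots$. Atoms $\alpha(x)=\bigwedge_{i=1}^q\pm P_i(x)$ are ordered lexicographically: $\alpha_1=\bigwedge P_i$, $\alpha_2=P_1\wedge\dots\wedge P_{q-1}\wedge\neg P_q$, etc., up to $\alpha_{2^q}=\bigwedge\neg P_i$. State descriptions are $\bigwedge_{i=1}^n\alpha_{h_i}(a_i)$. For $\vec x=\langle x_1,\dots,x_{2^q}\rangle$ with $x_j\ge0$, $\sum x_j=1$, the de Finetti function $w_{\vec x}$ is the probability function with $w_{\vec x}(\bigwedge_{i=1}^n\alpha_{h_i}(a_i))=\prod_{i=1}^n x_{h_i}$; a permutation $\sigma$ of atoms acts by $(\sigma\vec x)_{\sigma(j)}=x_j$. $\gamma_q(\alpha)$ is the number of negated predicates in $\alpha$. Px: $w$ is invariant under permuting the predicate symbols in sentences. P-spectrum of $\Theta=\bigwedge_k\alpha_{h_k}(a_k)$: for each $i\in\{0,\dots,q\}$, let $M_i$ be the multiset of sizes of the classes of the relation "$a_k\sim a_l\iff h_k=h_l$" on the constants whose atom has exactly $i$ negations; the P-spectrum is $\langle M_0,\dots,M_q\rangle$. SPx: $w(\Theta)=w(\Phi)$ whenever $\Theta,\Phi$ are state descriptions for the same constants with the same P-spectrum. *)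

theory Defs
  imports Complex_Main "HOL-Combinatorics.Permutations" "HOL-Library.Multiset"
begin

(* Atoms of L_q are indexed 1..2^q in lexicographic order:
   atom j contains +P_i iff bit (q-i) of (j-1) is 0.  So alpha_1 = all positive,
   alpha_2 = P_1 & ... & P_(q-1) & ~P_q, ..., alpha_(2^q) = all negative. *)
definition atom_pos :: "nat \<Rightarrow> nat \<Rightarrow> nat \<Rightarrow> bool" where
  "atom_pos q j i = (\<not> bit (j - 1) (q - i))"

definition atom_of_signs :: "nat \<Rightarrow> (nat \<Rightarrow> bool) \<Rightarrow> nat" where
  "atom_of_signs q s = 1 + (\<Sum>i=1..q. if s i then 0 else 2 ^ (q - i))"

definition gamma :: "nat \<Rightarrow> nat \<Rightarrow> nat" where
  "gamma q j = card {i \<in> {1..q}. \<not> atom_pos q j i}"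

(* Permutation of atoms induced by a permutation pi of the predicate symbols
   (P_i replaced by P_(pi i)): the sign of P_(pi i) in the new atom is the
   sign of P_i in the old one. *)
definition patom :: "nat \<Rightarrow> (nat \<Rightarrow> nat) \<Rightarrow> nat \<Rightarrow> nat" where
  "patom q \<pi> j = atom_of_signs q (\<lambda>i. atom_pos q j (inv_into {1..q} \<pi> i))"

(* State descriptions: finite partial maps from constant indices (a_c) to atom indices *)
type_synonym sdesc = "nat \<rightharpoonup> nat"

definition is_sd :: "nat \<Rightarrow> sdesc \<Rightarrow> bool" where
  "is_sd q \<Theta> \<longleftrightarrow> finite (dom \<Theta>) \<and> ran \<Theta> \<subseteq> {1..2^q}"

(* Probability function on SL_q, given by its values on state descriptions
   (determined by these by Gaifman's theorem) *)
definition prob_fn :: "nat \<Rightarrow> (sdesc \<Rightarrow> real) \<Rightarrow> bool" where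
  "prob_fn q w \<longleftrightarrow> w Map.empty = 1 \<and>
     (\<forall>\<Theta>. is_sd q \<Theta> \<longrightarrow> w \<Theta> \<ge> 0) \<and>
     (\<forall>\<Theta> c. is_sd q \<Theta> \<longrightarrow> c \<notin> dom \<Theta> \<longrightarrow>
          (\<Sum>j=1..2^q. w (\<Theta>(c \<mapsto> j))) = w \<Theta>)"

definition Cx :: "nat \<Rightarrow> (sdesc \<Rightarrow> real) \<Rightarrow> bool" where
  "Cx q w \<longleftrightarrow> (\<forall>\<rho> \<Theta>. bij \<rho> \<longrightarrow> is_sd q \<Theta> \<longrightarrow> w (\<Theta> \<circ> \<rho>) = w \<Theta>)"

definition Px :: "nat \<Rightarrow> (sdesc \<Rightarrow> real) \<Rightarrow> bool" where
  "Px q w \<longleftrightarrow> (\<forall>\<pi> \<Theta>. \<pi> permutes {1..q} \<longrightarrow> is_sd q \<Theta> \<longrightarrow>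
      w (map_option (patom q \<pi>) \<circ> \<Theta>) = w \<Theta>)"

definition P_spectrum :: "nat \<Rightarrow> sdesc \<Rightarrow> nat multiset list" where
  "P_spectrum q \<Theta> = map (\<lambda>i. image_mset (\<lambda>j. card {c \<in> dom \<Theta>. \<Theta> c = Some j})
        (mset_set {j \<in> ran \<Theta>. gamma q j = i})) [0..<Suc q]"

definition SPx :: "nat \<Rightarrow> (sdesc \<Rightarrow> real) \<Rightarrow> bool" where
  "SPx q w \<longleftrightarrow> (\<forall>\<Theta> \<Phi>. is_sd q \<Theta> \<longrightarrow> is_sd q \<Phi> \<longrightarrow> dom \<Theta> = dom \<Phi> \<longrightarrow>
      P_spectrum q \<Theta> = P_spectrum q \<Phi> \<longrightarrow> w \<Theta> = w \<Phi>)"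

definition deFinetti :: "(nat \<Rightarrow> real) \<Rightarrow> sdesc \<Rightarrow> real" where
  "deFinetti x \<Theta> = (\<Prod>c\<in>dom \<Theta>. x (the (\<Theta> c)))"

definition perm_vec :: "nat \<Rightarrow> (nat \<Rightarrow> nat) \<Rightarrow> (nat \<Rightarrow> real) \<Rightarrow> nat \<Rightarrow> real" where
  "perm_vec q \<sigma> x = (\<lambda>k. x (inv_into {1..2^q} \<sigma> k))"

definition bvec :: "nat \<Rightarrow> real" where
  "bvec j = (if 1 \<le> j \<and> j \<le> 8 then real ([1,2,4,5,2,3,1,1] ! (j - 1)) / 19 else 0)"

definition w_ex :: "sdesc \<Rightarrow> real" where
  "w_ex \<Theta> = (1/6) * (\<Sum>\<pi>\<in>{\<pi>. \<pi> permutes {1..3::nat}}.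
                         deFinetti (perm_vec 3 (patom 3 \<pi>) bvec) \<Theta>)"

definition Theta_ex :: sdesc where
  "Theta_ex = [1 \<mapsto> 2, 2 \<mapsto> 4, 3 \<mapsto> 5, 4 \<mapsto> 7, 5 \<mapsto> 7]"

definition Phi_ex :: sdesc where
  "Phi_ex = [1 \<mapsto> 3, 2 \<mapsto> 5, 3 \<mapsto> 6, 4 \<mapsto> 6, 5 \<mapsto> 7]"

end

theory Submission
  imports Defs
begin

(* The vector of the de Finetti function for the induced atom permutation of pi is x composed
   with rename_atom pi, which reorders the signs of an atom, so the mixture w is the average over
   all predicate permutations rho of the products of x (rename_atom rho) over the constants.
   Applying a predicate permutation pi to a state description replaces rho by pi^-1 o rho, which
   only reorders this average: that is Px. The probability axioms and Cx hold for every de Finetti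
   function of a probability vector and survive averaging. SPx fails because the P-spectrum
   records, for each number of negations, only how often atoms occur and not which atoms they are:
   Theta and Phi have the same spectrum, but w(Theta) = 196/19^5 and w(Phi) = 164/19^5. *)

lemma atom_of_signs_eq_horner_sum:
  "atom_of_signs q s = 1 + horner_sum of_bool 2 (map (\<lambda>k. \<not> s (q - k)) [0..<q])"
proof -
  have "(\<Sum>i=1..q. if s i then 0 else 2 ^ (q - i)) =
      (\<Sum>k<q. of_bool (\<not> s (q - k)) * (2::nat) ^ k)"
    by (rule sum.reindex_bij_witness[of _ "\<lambda>k. q - k" "\<lambda>i. q - i"]) auto
  then show ?thesis
    by (simp add: atom_of_signs_def horner_sum_eq_sum atLeast0LessThan)
qed

lemma atom_of_signs_in_atoms: "atom_of_signs q s \<in> {1..2^q}"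
proof -
  let ?bs = "map (\<lambda>k. \<not> s (q - k)) [0..<q]"
  have "horner_sum of_bool 2 ?bs = take_bit q (horner_sum of_bool 2 ?bs :: nat)"
    by (simp add: take_bit_horner_sum_bit_eq)
  also have "\<dots> < 2 ^ q" by simp
  finally show ?thesis by (simp add: atom_of_signs_eq_horner_sum)
qed

lemma atom_pos_atom_of_signs:
  assumes "i \<in> {1..q}" shows "atom_pos q (atom_of_signs q s) i = s i"
  using assms by (simp add: atom_pos_def atom_of_signs_eq_horner_sum bit_horner_sum_bit_iff)

lemma atom_of_signs_atom_pos:
  assumes "j \<in> {1..2^q}" shows "atom_of_signs q (atom_pos q j) = j"
proof -
  have bits: "map (\<lambda>k. \<not> atom_pos q j (q - k)) [0..<q] = map (bit (j - 1)) [0..<q]"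
    by (simp add: atom_pos_def)
  have "atom_of_signs q (atom_pos q j) = 1 + take_bit q (j - 1)"
    unfolding atom_of_signs_eq_horner_sum bits horner_sum_bit_eq_take_bit ..
  also have "\<dots> = j"
    using assms by (subst take_bit_nat_eq_self) auto
  finally show ?thesis .
qed

lemma atom_of_signs_cong:
  assumes "\<And>i. i \<in> {1..q} \<Longrightarrow> s i = t i" shows "atom_of_signs q s = atom_of_signs q t"
  unfolding atom_of_signs_def using assms by (intro arg_cong[where f = "(+) 1"] sum.cong) auto

lemma inv_into_permutes:
  assumes "\<pi> permutes S" "i \<in> S" shows "inv_into S \<pi> i = inv \<pi> i"
  using assms by (metis inv_into_f_eq permutes_inj_on permutes_inverses(1) permutes_in_image)

(* On atoms this inverts patom q pi, without needing an inverse of pi. *)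
definition rename_atom :: "nat \<Rightarrow> (nat \<Rightarrow> nat) \<Rightarrow> nat \<Rightarrow> nat" where
  "rename_atom q \<pi> k = atom_of_signs q (\<lambda>i. atom_pos q k (\<pi> i))"

lemma rename_atom_in_atoms: "rename_atom q \<pi> k \<in> {1..2^q}"
  unfolding rename_atom_def by (rule atom_of_signs_in_atoms)

lemma patom_in_atoms: "patom q \<pi> j \<in> {1..2^q}"
  unfolding patom_def by (rule atom_of_signs_in_atoms)

lemma rename_atom_patom:
  assumes "\<pi> permutes {1..q}" "\<rho> permutes {1..q}"
  shows "rename_atom q \<rho> (patom q \<pi> j) = rename_atom q (inv \<pi> \<circ> \<rho>) j"
  unfolding rename_atom_def patom_def
proof (intro atom_of_signs_cong)
  fix i assume "i \<in> {1..q}"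
  then have "\<rho> i \<in> {1..q}" by (simp only: permutes_in_image[OF assms(2)])
  then show "atom_pos q (atom_of_signs q (\<lambda>i. atom_pos q j (inv_into {1..q} \<pi> i))) (\<rho> i) =
      atom_pos q j ((inv \<pi> \<circ> \<rho>) i)"
    by (simp only: atom_pos_atom_of_signs inv_into_permutes[OF assms(1)] comp_apply)
qed

lemma rename_atom_patom_cancel:
  assumes "\<pi> permutes {1..q}" "j \<in> {1..2^q}"
  shows "rename_atom q \<pi> (patom q \<pi> j) = j"
proof -
  have "rename_atom q \<pi> (patom q \<pi> j) = atom_of_signs q (atom_pos q j)"
    unfolding rename_atom_patom[OF assms(1,1)] permutes_inv_o(2)[OF assms(1)]
    by (simp add: rename_atom_def)
  then show ?thesis using assms(2) by (simp add: atom_of_signs_atom_pos)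
qed

lemma patom_rename_atom_cancel:
  assumes "\<pi> permutes {1..q}" "k \<in> {1..2^q}"
  shows "patom q \<pi> (rename_atom q \<pi> k) = k"
proof -
  have "patom q \<pi> (rename_atom q \<pi> k) = atom_of_signs q (atom_pos q k)"
    unfolding rename_atom_def patom_def
  proof (intro atom_of_signs_cong)
    fix i assume i: "i \<in> {1..q}"
    then have "inv_into {1..q} \<pi> i \<in> {1..q}"
      by (simp only: inv_into_permutes[OF assms(1)] permutes_in_image[OF permutes_inv[OF assms(1)]])
    then show "atom_pos q (atom_of_signs q (\<lambda>i. atom_pos q k (\<pi> i))) (inv_into {1..q} \<pi> i) =
        atom_pos q k i"
      using i
      by (simp only: atom_pos_atom_of_signs inv_into_permutes[OF assms(1)]
          permutes_inverses(1)[OF assms(1)])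
  qed
  then show ?thesis using assms(2) by (simp add: atom_of_signs_atom_pos)
qed

lemma perm_vec_patom:
  assumes "\<pi> permutes {1..q}" "k \<in> {1..2^q}"
  shows "perm_vec q (patom q \<pi>) x k = x (rename_atom q \<pi> k)"
proof -
  have "inj_on (patom q \<pi>) {1..2^q}"
    using rename_atom_patom_cancel[OF assms(1)] by (metis inj_on_inverseI)
  then show ?thesis
    unfolding perm_vec_def
    using inv_into_f_eq rename_atom_in_atoms patom_rename_atom_cancel[OF assms] by metis
qed

lemma sum_rename_atom:
  assumes "\<pi> permutes {1..q}"
  shows "(\<Sum>k=1..2^q. x (rename_atom q \<pi> k)) = (\<Sum>j=1..2^q. x j)"
  using assms
  by (intro sum.reindex_bij_witness[of _ "patom q \<pi>" "rename_atom q \<pi>"])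
    (simp_all only: rename_atom_patom_cancel patom_rename_atom_cancel rename_atom_in_atoms patom_in_atoms)

lemma deFinetti_upd:
  assumes "finite (dom \<Theta>)" "c \<notin> dom \<Theta>"
  shows "deFinetti x (\<Theta>(c \<mapsto> j)) = x j * deFinetti x \<Theta>"
proof -
  have "(\<Prod>d\<in>dom \<Theta>. x (the ((\<Theta>(c \<mapsto> j)) d))) = deFinetti x \<Theta>"
    unfolding deFinetti_def using assms(2) by (intro prod.cong) auto
  then show ?thesis using assms by (simp add: deFinetti_def)
qed

lemma deFinetti_comp_bij:
  assumes "bij \<rho>" shows "deFinetti x (\<Theta> \<circ> \<rho>) = deFinetti x \<Theta>"
proof -
  have "dom (\<Theta> \<circ> \<rho>) = \<rho> -` dom \<Theta>" by (auto simp: dom_def)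
  moreover have "bij_betw \<rho> (\<rho> -` dom \<Theta>) (dom \<Theta>)"
    using assms by (metis bij_betw_imp_surj bij_betw_subset subset_UNIV surj_image_vimage_eq)
  ultimately show ?thesis
    unfolding deFinetti_def
    using prod.reindex_bij_betw[of \<rho> _ "dom \<Theta>" "\<lambda>c. x (the (\<Theta> c))"] by simp
qed

lemma prob_fn_deFinetti:
  assumes nonneg: "\<And>j. j \<in> {1..2^q} \<Longrightarrow> 0 \<le> x j" and sum_one: "(\<Sum>j=1..2^q. x j) = 1"
  shows "prob_fn q (deFinetti x)"
  unfolding prob_fn_def
proof (intro conjI allI impI)
  show "deFinetti x Map.empty = 1" by (simp add: deFinetti_def)
next
  fix \<Theta> assume "is_sd q \<Theta>"
  then show "0 \<le> deFinetti x \<Theta>"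
    unfolding deFinetti_def is_sd_def by (intro prod_nonneg nonneg) (auto intro: ranI)
next
  fix \<Theta> c assume "is_sd q \<Theta>" "c \<notin> dom \<Theta>"
  then have "(\<Sum>j=1..2^q. deFinetti x (\<Theta>(c \<mapsto> j))) = (\<Sum>j=1..2^q. x j) * deFinetti x \<Theta>"
    by (simp add: is_sd_def deFinetti_upd sum_distrib_right)
  then show "(\<Sum>j=1..2^q. deFinetti x (\<Theta>(c \<mapsto> j))) = deFinetti x \<Theta>"
    using sum_one by simp
qed

lemma prob_fn_average:
  assumes "finite S" "S \<noteq> {}" "\<And>s. s \<in> S \<Longrightarrow> prob_fn q (w s)"
  shows "prob_fn q (\<lambda>\<Theta>. (\<Sum>s\<in>S. w s \<Theta>) / card S)"
  unfolding prob_fn_def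
proof (intro conjI allI impI)
  show "(\<Sum>s\<in>S. w s Map.empty) / card S = 1"
    using assms by (simp add: prob_fn_def)
next
  fix \<Theta> assume "is_sd q \<Theta>"
  then show "0 \<le> (\<Sum>s\<in>S. w s \<Theta>) / card S"
    using assms(3) by (intro divide_nonneg_nonneg sum_nonneg) (auto simp: prob_fn_def)
next
  fix \<Theta> c assume "is_sd q \<Theta>" "c \<notin> dom \<Theta>"
  then have "(\<Sum>j=1..2^q. \<Sum>s\<in>S. w s (\<Theta>(c \<mapsto> j))) = (\<Sum>s\<in>S. w s \<Theta>)"
    using assms(3) by (subst sum.swap) (simp add: prob_fn_def)
  then show "(\<Sum>j=1..2^q. (\<Sum>s\<in>S. w s (\<Theta>(c \<mapsto> j))) / card S) =
      (\<Sum>s\<in>S. w s \<Theta>) / card S"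
    by (simp flip: sum_divide_distrib)
qed

definition symmetrized :: "nat \<Rightarrow> (nat \<Rightarrow> real) \<Rightarrow> sdesc \<Rightarrow> real" where
  "symmetrized q x \<Theta> =
     (\<Sum>\<pi> | \<pi> permutes {1..q}. deFinetti (perm_vec q (patom q \<pi>) x) \<Theta>) / fact q"

lemma prob_fn_symmetrized:
  assumes "\<And>j. j \<in> {1..2^q} \<Longrightarrow> 0 \<le> x j" "(\<Sum>j=1..2^q. x j) = 1"
  shows "prob_fn q (symmetrized q x)"
proof -
  have "prob_fn q (deFinetti (perm_vec q (patom q \<pi>) x))" if \<pi>: "\<pi> permutes {1..q}" for \<pi>
  proof (rule prob_fn_deFinetti)
    show "0 \<le> perm_vec q (patom q \<pi>) x j" if "j \<in> {1..2^q}" for j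
      unfolding perm_vec_patom[OF \<pi> that] by (rule assms(1)[OF rename_atom_in_atoms])
    have "(\<Sum>j=1..2^q. perm_vec q (patom q \<pi>) x j) = (\<Sum>j=1..2^q. x (rename_atom q \<pi> j))"
      by (rule sum.cong[OF refl perm_vec_patom[OF \<pi>]])
    then show "(\<Sum>j=1..2^q. perm_vec q (patom q \<pi>) x j) = 1"
      by (simp only: sum_rename_atom[OF \<pi>] assms(2))
  qed
  then have "prob_fn q (\<lambda>\<Theta>. (\<Sum>\<pi> | \<pi> permutes {1..q}. deFinetti (perm_vec q (patom q \<pi>) x) \<Theta>)
                            / card {\<pi>. \<pi> permutes {1..q}})"
    by (intro prob_fn_average) (auto simp: finite_permutations intro!: exI[of _ id] permutes_id)
  moreover have "card {\<pi>. \<pi> permutes {1..q}} = fact q"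
    by (simp add: card_permutations)
  ultimately show ?thesis
    by (simp only: symmetrized_def[abs_def] of_nat_fact)
qed

lemma Cx_symmetrized: "Cx q (symmetrized q x)"
  by (simp add: Cx_def symmetrized_def deFinetti_comp_bij)

lemma symmetrized_eq_rename_atom:
  assumes "ran \<Theta> \<subseteq> {1..2^q}"
  shows "symmetrized q x \<Theta> =
    (\<Sum>\<pi> | \<pi> permutes {1..q}. \<Prod>c\<in>dom \<Theta>. x (rename_atom q \<pi> (the (\<Theta> c)))) / fact q"
proof -
  have "the (\<Theta> c) \<in> {1..2^q}" if "c \<in> dom \<Theta>" for c
    using assms that by (auto intro: ranI)
  then show ?thesis
    unfolding symmetrized_def deFinetti_def by (simp add: perm_vec_patom)
qed

lemma Px_symmetrized: "Px q (symmetrized q x)"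
  unfolding Px_def
proof (intro allI impI)
  fix \<pi> \<Theta> assume \<pi>: "\<pi> permutes {1..q}" and "is_sd q \<Theta>"
  then have ran: "ran \<Theta> \<subseteq> {1..2^q}" by (simp add: is_sd_def)
  define \<Theta>' where "\<Theta>' = map_option (patom q \<pi>) \<circ> \<Theta>"
  have dom': "dom \<Theta>' = dom \<Theta>" by (auto simp: \<Theta>'_def)
  have the': "the (\<Theta>' c) = patom q \<pi> (the (\<Theta> c))" if "c \<in> dom \<Theta>" for c
    using that by (auto simp: \<Theta>'_def)
  have "ran \<Theta>' \<subseteq> {1..2^q}"
    using patom_in_atoms by (auto simp: \<Theta>'_def ran_def)
  then have "symmetrized q x \<Theta>' =
      (\<Sum>\<rho> | \<rho> permutes {1..q}.
         \<Prod>c\<in>dom \<Theta>. x (rename_atom q \<rho> (patom q \<pi> (the (\<Theta> c))))) / fact q"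
    by (simp add: symmetrized_eq_rename_atom dom' the')
  also have "\<dots> =
      (\<Sum>\<rho> | \<rho> permutes {1..q}.
         \<Prod>c\<in>dom \<Theta>. x (rename_atom q (inv \<pi> \<circ> \<rho>) (the (\<Theta> c)))) / fact q"
    using \<pi> by (simp add: rename_atom_patom)
  also have "\<dots> = symmetrized q x \<Theta>"
    using setum_permutations_compose_left[OF permutes_inv[OF \<pi>],
        of "\<lambda>\<rho>. \<Prod>c\<in>dom \<Theta>. x (rename_atom q \<rho> (the (\<Theta> c)))"]
    by (simp add: symmetrized_eq_rename_atom[OF ran])
  finally show "symmetrized q x \<Theta>' = symmetrized q x \<Theta>" .
qed

lemma w_ex_eq_symmetrized: "w_ex = symmetrized 3 bvec"
  by (simp add: fun_eq_iff w_ex_def symmetrized_def fact_numeral)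

lemma bvec_nonneg: "0 \<le> bvec j"
  by (simp add: bvec_def)

lemma sum_bvec: "(\<Sum>j=1..2^3. bvec j) = 1"
proof -
  have "{1..2^3::nat} = {1,2,3,4,5,6,7,8}" by auto
  then show ?thesis by (simp add: bvec_def)
qed

lemma Collect_conj_insert:
  "{x \<in> insert a A. P x} = (if P a then insert a {x \<in> A. P x} else {x \<in> A. P x})"
  by auto

lemma predicate_indices_3: "{1..3::nat} = {1,2,3}"
  by auto

lemma sum_permutations_3:
  "(\<Sum>\<pi> | \<pi> permutes {1..3::nat}. f \<pi>) =
     (\<Sum>a\<in>{1,2,3}. \<Sum>b\<in>{2,3}. f (transpose 1 a \<circ> transpose 2 b))"
  unfolding predicate_indices_3 by (simp add: sum_over_permutations_insert)

lemma rename_atom_3: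
  "rename_atom 3 \<pi> k =
     1 + (if atom_pos 3 k (\<pi> 1) then 0 else 4) + (if atom_pos 3 k (\<pi> 2) then 0 else 2)
       + (if atom_pos 3 k (\<pi> 3) then 0 else 1)"
  unfolding rename_atom_def atom_of_signs_def predicate_indices_3 by simp

lemma gamma_3_values:
  "gamma 3 2 = 1" "gamma 3 3 = 1" "gamma 3 4 = 2" "gamma 3 5 = 1" "gamma 3 6 = 2" "gamma 3 7 = 2"
  unfolding gamma_def predicate_indices_3 Collect_conj_insert by (simp_all add: atom_pos_def bit_0)

lemma dom_Theta_ex: "dom Theta_ex = {1,2,3,4,5}"
  by (auto simp: Theta_ex_def)

lemma ran_Theta_ex: "ran Theta_ex = {2,4,5,7}"
  by (simp add: Theta_ex_def insert_commute)

lemma dom_Phi_ex: "dom Phi_ex = {1,2,3,4,5}"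
  by (auto simp: Phi_ex_def)

lemma ran_Phi_ex: "ran Phi_ex = {3,5,6,7}"
  by (simp add: Phi_ex_def insert_commute)

lemma is_sd_Theta_ex: "is_sd 3 Theta_ex"
  by (simp add: is_sd_def dom_Theta_ex ran_Theta_ex)

lemma is_sd_Phi_ex: "is_sd 3 Phi_ex"
  by (simp add: is_sd_def dom_Phi_ex ran_Phi_ex)

lemma w_ex_Theta_ex: "w_ex Theta_ex = 196 / 19^5"
proof -
  have ran: "ran Theta_ex \<subseteq> {1..2^3}" by (simp add: ran_Theta_ex)
  show ?thesis
    unfolding w_ex_eq_symmetrized symmetrized_eq_rename_atom[OF ran] sum_permutations_3 dom_Theta_ex
    by (simp add: rename_atom_3 atom_pos_def Theta_ex_def bvec_def fact_numeral bit_0)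
qed

lemma w_ex_Phi_ex: "w_ex Phi_ex = 164 / 19^5"
proof -
  have ran: "ran Phi_ex \<subseteq> {1..2^3}" by (simp add: ran_Phi_ex)
  show ?thesis
    unfolding w_ex_eq_symmetrized symmetrized_eq_rename_atom[OF ran] sum_permutations_3 dom_Phi_ex
    by (simp add: rename_atom_3 atom_pos_def Phi_ex_def bvec_def fact_numeral bit_0)
qed

lemma P_spectrum_Theta_ex: "P_spectrum 3 Theta_ex = [{#}, {#1, 1#}, {#1, 2#}, {#}]"
  unfolding P_spectrum_def ran_Theta_ex dom_Theta_ex Collect_conj_insert
  by (simp add: gamma_3_values Theta_ex_def upt_rec)

lemma P_spectrum_Phi_ex: "P_spectrum 3 Phi_ex = [{#}, {#1, 1#}, {#1, 2#}, {#}]"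
  unfolding P_spectrum_def ran_Phi_ex dom_Phi_ex Collect_conj_insert
  by (simp add: gamma_3_values Phi_ex_def upt_rec)

theorem mainTheorem2:
  shows "prob_fn 3 w_ex \<and> Cx 3 w_ex \<and> Px 3 w_ex \<and> \<not> SPx 3 w_ex \<and>
         is_sd 3 Theta_ex \<and> is_sd 3 Phi_ex \<and> dom Theta_ex = dom Phi_ex \<and>
         P_spectrum 3 Theta_ex = P_spectrum 3 Phi_ex \<and> w_ex Theta_ex \<noteq> w_ex Phi_ex"
proof -
  have same_dom: "dom Theta_ex = dom Phi_ex"
    by (simp add: dom_Theta_ex dom_Phi_ex)
  have same_spectrum: "P_spectrum 3 Theta_ex = P_spectrum 3 Phi_ex"
    by (simp add: P_spectrum_Theta_ex P_spectrum_Phi_ex)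
  have different_values: "w_ex Theta_ex \<noteq> w_ex Phi_ex"
    by (simp add: w_ex_Theta_ex w_ex_Phi_ex)
  have "\<not> SPx 3 w_ex"
    unfolding SPx_def using is_sd_Theta_ex is_sd_Phi_ex same_dom same_spectrum different_values
    by blast
  moreover have "prob_fn 3 w_ex"
    unfolding w_ex_eq_symmetrized by (rule prob_fn_symmetrized[OF bvec_nonneg sum_bvec])
  ultimately show ?thesis
    using Cx_symmetrized Px_symmetrized is_sd_Theta_ex is_sd_Phi_ex same_dom same_spectrum
      different_values
    by (simp add: w_ex_eq_symmetrized)
qed

end
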